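(* Let $(L,\vee,\wedge,0,1)$ be a complemented modular lattice with $0\ne1$ and $a,b,c\in L$. Then: (i) if $\{a\}\le_1 b\to c$, then $a\wedge b\le c$; (ii) $a\wedge b\le c$ if and only if $\{a\wedge b\}\le_1 b\to c$.
   Context: For $a\in L$, $a^+:=\{x\in L\mid a\vee x=1,\ a\wedge x=0\}$ (the set of all complements of $a$). For $A,B\subseteq L$: $A\vee B:=\{x\vee y\mid x\in A,y\in B\}$; $A\le_1B$ means that for every $x\in A$ there exists $y\in B$ with $x\le y$. For $a,b\in L$ define the subset $a\to b:=a^+\vee\{a\wedge b\}=\{x\vee(a\wedge b)\mid x\in a^+\}$. *)

theory Defs
  imports Main
begin

definition compls :: "'a::bounded_lattice \<Rightarrow> 'a set" where
  "compls a = {x. sup a x = top \<and> inf a x = bot}"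

definition set_sup :: "'a::lattice set \<Rightarrow> 'a set \<Rightarrow> 'a set" where
  "set_sup A B = {sup x y | x y. x \<in> A \<and> y \<in> B}"

definition le1 :: "'a::order set \<Rightarrow> 'a set \<Rightarrow> bool" where
  "le1 A B \<longleftrightarrow> (\<forall>x\<in>A. \<exists>y\<in>B. x \<le> y)"

definition impl_set :: "'a::bounded_lattice \<Rightarrow> 'a \<Rightarrow> 'a set" where
  "impl_set a b = set_sup (compls a) {inf a b}"

definition modular_lattice :: "'a::lattice itself \<Rightarrow> bool" where
  "modular_lattice _ \<longleftrightarrow> (\<forall>x y z::'a. x \<le> z \<longrightarrow> sup x (inf y z) = inf (sup x y) z)"

definition complemented_lattice :: "'a::bounded_lattice itself \<Rightarrow> bool" where
  "complemented_lattice _ \<longleftrightarrow> (\<forall>x::'a. compls x \<noteq> {})"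

end

theory Submission
  imports Defs
begin

text \<open>Part (i) rests on the modular law: if \<open>x\<close> is a complement of \<open>b\<close>, then
  \<open>(x \<or> (b \<and> c)) \<and> b = (b \<and> c) \<or> (x \<and> b) = b \<and> c\<close>, so every element of \<open>b \<rightarrow> c\<close>
  meets \<open>b\<close> below \<open>c\<close>. Part (ii) follows from (i) and the fact that \<open>b \<and> c\<close> lies below
  every element of the (nonempty) set \<open>b \<rightarrow> c\<close>.\<close>

lemma le1_singleton_iff: "le1 {a} B \<longleftrightarrow> (\<exists>y\<in>B. a \<le> y)"
  by (simp add: le1_def)

lemma mem_impl_set_iff: "y \<in> impl_set b c \<longleftrightarrow> (\<exists>x\<in>compls b. y = sup x (inf b c))"
  by (auto simp: impl_set_def set_sup_def)

lemma modular_inf_sup_disjoint: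
  fixes x y b :: "'a::bounded_lattice"
  assumes "modular_lattice TYPE('a)" and "y \<le> b" and "inf x b = bot"
  shows "inf (sup y x) b = y"
proof -
  have "inf (sup y x) b = sup y (inf x b)"
    using assms(1,2) unfolding modular_lattice_def by metis
  with assms(3) show ?thesis by simp
qed

lemma inf_le_of_le1_impl_set:
  fixes a b c :: "'a::bounded_lattice"
  assumes "modular_lattice TYPE('a)" and "le1 {a} (impl_set b c)"
  shows "inf a b \<le> c"
proof -
  obtain x where x: "x \<in> compls b" and a_le: "a \<le> sup x (inf b c)"
    using assms(2) by (auto simp: le1_singleton_iff mem_impl_set_iff)
  have "inf x b = bot"
    using x by (simp add: compls_def inf_commute)
  have "inf a b \<le> inf (sup (inf b c) x) b"
    using a_le by (simp add: le_infI1 sup_commute)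
  also have "\<dots> = inf b c"
    using modular_inf_sup_disjoint[OF assms(1) _ \<open>inf x b = bot\<close>] by simp
  finally show ?thesis by simp
qed

lemma le1_impl_set_of_inf_le:
  fixes a b c :: "'a::bounded_lattice"
  assumes "complemented_lattice TYPE('a)" and "inf a b \<le> c"
  shows "le1 {inf a b} (impl_set b c)"
proof -
  obtain x where x: "x \<in> compls b"
    using assms(1) unfolding complemented_lattice_def by blast
  have "inf a b \<le> sup x (inf b c)"
    using assms(2) by (simp add: le_supI2)
  moreover have "sup x (inf b c) \<in> impl_set b c"
    using x by (auto simp: mem_impl_set_iff)
  ultimately show ?thesis
    by (auto simp: le1_singleton_iff)
qed

theorem theorem2:
  fixes a b c :: "'a::bounded_lattice"
  assumes "modular_lattice TYPE('a)"
    and "complemented_lattice TYPE('a)"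
    and "(bot::'a) \<noteq> top"
  shows "(le1 {a} (impl_set b c) \<longrightarrow> inf a b \<le> c)
     \<and> (inf a b \<le> c \<longleftrightarrow> le1 {inf a b} (impl_set b c))"
proof (intro conjI impI iffI)
  show "inf a b \<le> c" if "le1 {a} (impl_set b c)"
    using inf_le_of_le1_impl_set[OF assms(1) that] .
  show "le1 {inf a b} (impl_set b c)" if "inf a b \<le> c"
    using le1_impl_set_of_inf_le[OF assms(2) that] .
  show "inf a b \<le> c" if "le1 {inf a b} (impl_set b c)"
    using inf_le_of_le1_impl_set[OF assms(1) that] by (simp add: inf_assoc)
qed

end
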